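(* Let $\beta\ge0$, $\gamma>0$, $\lambda>0$ with $\beta\gamma<1$, and let $d\ge1$ be an integer. For any vector $\mathbf{x} \in \mathbb{R}_{\geq 0}^d$ there exists $\overline{x} \geq 0$ such that $$\sum_{i=1}^d h(x_i) \leq d \cdot h(\overline{x}) \quad \text{and} \quad F_d(\mathbf{x}) = F_d(\overline{x},\ldots,\overline{x}),$$ where $h(x) = \frac{(1-\beta\gamma)x}{(\beta x+1)(x+\gamma)}$ and $F_d(\mathbf x)=\lambda\prod_{i=1}^d\frac{\beta x_i+1}{x_i+\gamma}$. *)

theory Defs
  imports Complex_Main
begin

definition h_fun :: "real \<Rightarrow> real \<Rightarrow> real \<Rightarrow> real" where
  "h_fun \<beta> \<gamma> x = (1 - \<beta> * \<gamma>) * x / ((\<beta> * x + 1) * (x + \<gamma>))"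

definition F_fun :: "real \<Rightarrow> real \<Rightarrow> real \<Rightarrow> nat \<Rightarrow> (nat \<Rightarrow> real) \<Rightarrow> real" where
  "F_fun \<beta> \<gamma> lam d x = lam * (\<Prod>i=1..d. (\<beta> * x i + 1) / (x i + \<gamma>))"

end

theory Submission
  imports Defs
begin

text \<open>Write \<open>g z = (\<beta> z + 1) / (z + \<gamma>)\<close>, so that \<open>F\<^sub>d\<close> is \<open>\<lambda>\<close> times the product of the
  \<open>g (x\<^sub>i)\<close>, and \<open>h z = (1 + \<beta>\<gamma> - \<gamma> g z - \<beta> / g z) / (1 - \<beta>\<gamma>)\<close>. On \<open>z \<ge> 0\<close> the map \<open>g\<close>
  takes values in \<open>(\<beta>, 1/\<gamma>]\<close> and is onto this interval. Take \<open>x\<close> with \<open>g x\<close> equal to the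
  geometric mean of the \<open>g (x\<^sub>i)\<close>: this keeps the product, hence \<open>F\<^sub>d\<close>, unchanged, and by
  AM-GM applied to the \<open>g (x\<^sub>i)\<close> and to their reciprocals the sum of the \<open>h (x\<^sub>i)\<close> can
  only grow.\<close>

definition geo_mean :: "'a set \<Rightarrow> ('a \<Rightarrow> real) \<Rightarrow> real" where
  "geo_mean A a = exp ((\<Sum>i\<in>A. ln (a i)) / real (card A))"

lemma geo_mean_pos: "geo_mean A a > 0"
  by (simp add: geo_mean_def)

lemma card_mult_exp_mean_le_sum_exp:
  fixes t :: "'a \<Rightarrow> real"
  assumes "finite A" "A \<noteq> {}"
  shows "real (card A) * exp ((\<Sum>i\<in>A. t i) / real (card A)) \<le> (\<Sum>i\<in>A. exp (t i))"
proof -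
  define m where "m = (\<Sum>i\<in>A. t i) / real (card A)"
  have card_pos: "real (card A) > 0"
    using assms by auto
  \<comment> \<open>the tangent line of \<open>exp\<close> at the mean lies below \<open>exp\<close>\<close>
  have tangent: "exp m * (1 + (t i - m)) \<le> exp (t i)" for i
    using exp_ge_add_one_self[of "t i - m"] by (simp add: exp_diff field_simps)
  have "(\<Sum>i\<in>A. exp m * (1 + (t i - m))) = exp m * real (card A)"
    using card_pos by (simp add: sum_distrib_left[symmetric] sum.distrib sum_subtractf m_def)
  moreover have "(\<Sum>i\<in>A. exp m * (1 + (t i - m))) \<le> (\<Sum>i\<in>A. exp (t i))"
    using tangent by (rule sum_mono)
  ultimately show ?thesis
    by (simp add: m_def mult.commute)
qed

lemma geo_mean_power:
  assumes "finite A" "\<And>i. i \<in> A \<Longrightarrow> a i > 0"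
  shows "geo_mean A a ^ card A = (\<Prod>i\<in>A. a i)"
proof (cases "A = {}")
  case False
  then have "geo_mean A a ^ card A = exp (\<Sum>i\<in>A. ln (a i))"
    using assms(1) by (simp add: geo_mean_def exp_of_nat_mult[symmetric])
  also have "\<dots> = (\<Prod>i\<in>A. a i)"
    using assms by (simp add: exp_sum)
  finally show ?thesis .
qed simp

lemma card_mult_geo_mean_le_sum:
  assumes "finite A" "A \<noteq> {}" "\<And>i. i \<in> A \<Longrightarrow> a i > 0"
  shows "real (card A) * geo_mean A a \<le> (\<Sum>i\<in>A. a i)"
  using card_mult_exp_mean_le_sum_exp[OF assms(1,2), of "\<lambda>i. ln (a i)"] assms(3)
  by (simp add: geo_mean_def)

lemma geo_mean_inverse:
  assumes "\<And>i. i \<in> A \<Longrightarrow> a i > 0"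
  shows "geo_mean A (\<lambda>i. 1 / a i) = 1 / geo_mean A a"
proof -
  have "(\<Sum>i\<in>A. ln (1 / a i)) = - (\<Sum>i\<in>A. ln (a i))"
    using assms by (simp add: ln_div sum_negf[symmetric] less_imp_neq[symmetric] cong: sum.cong)
  then show ?thesis
    by (simp add: geo_mean_def exp_minus inverse_eq_divide)
qed

lemma card_div_geo_mean_le_sum_inverse:
  assumes "finite A" "A \<noteq> {}" "\<And>i. i \<in> A \<Longrightarrow> a i > 0"
  shows "real (card A) / geo_mean A a \<le> (\<Sum>i\<in>A. 1 / a i)"
  using card_mult_geo_mean_le_sum[OF assms(1,2), of "\<lambda>i. 1 / a i"] assms(3)
  by (simp add: geo_mean_inverse)

lemma geo_mean_le:
  assumes "finite A" "A \<noteq> {}" "\<And>i. i \<in> A \<Longrightarrow> 0 < a i \<and> a i \<le> c"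
  shows "geo_mean A a \<le> c"
proof -
  have "geo_mean A a ^ card A \<le> c ^ card A"
    using assms prod_mono[of A a "\<lambda>_. c"] by (simp add: geo_mean_power less_imp_le)
  moreover have "c \<ge> 0"
    using assms by force
  ultimately show ?thesis
    using assms(1,2) power_le_imp_le_base[of _ "card A - 1"] by (simp add: Suc_diff_le card_gt_0_iff)
qed

lemma geo_mean_gt:
  assumes "finite A" "A \<noteq> {}" "0 \<le> c" "\<And>i. i \<in> A \<Longrightarrow> c < a i"
  shows "c < geo_mean A a"
proof -
  obtain j where "j \<in> A"
    using assms(2) by blast
  moreover have "\<And>i. i \<in> A \<Longrightarrow> 0 < a i"
    using assms(3,4) by force
  ultimately have "c ^ card A < geo_mean A a ^ card A"
    using assms prod_mono_strict[of j A "\<lambda>_. c" a]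
    by (simp add: geo_mean_power less_imp_le)
  then show ?thesis
    using geo_mean_pos less_imp_le power_less_imp_less_base by blast
qed

definition ratio :: "real \<Rightarrow> real \<Rightarrow> real \<Rightarrow> real" where
  "ratio \<beta> \<gamma> z = (\<beta> * z + 1) / (z + \<gamma>)"

definition ratio_inv :: "real \<Rightarrow> real \<Rightarrow> real \<Rightarrow> real" where
  "ratio_inv \<beta> \<gamma> y = (1 - \<gamma> * y) / (y - \<beta>)"

lemma F_fun_eq_prod_ratio:
  "F_fun \<beta> \<gamma> lam d x = lam * (\<Prod>i=1..d. ratio \<beta> \<gamma> (x i))"
  by (simp add: F_fun_def ratio_def)

locale antiferromagnetic =
  fixes \<beta> \<gamma> :: real
  assumes beta_nonneg: "\<beta> \<ge> 0"
    and gamma_pos: "\<gamma> > 0"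
    and beta_gamma_less_1: "\<beta> * \<gamma> < 1"
begin

lemma ratio_gt:
  assumes "z \<ge> 0"
  shows "\<beta> < ratio \<beta> \<gamma> z"
proof -
  have "\<beta> * (z + \<gamma>) < \<beta> * z + 1"
    using beta_gamma_less_1 by (simp add: algebra_simps)
  then show ?thesis
    using assms gamma_pos by (simp add: ratio_def less_divide_eq)
qed

lemma ratio_le:
  assumes "z \<ge> 0"
  shows "ratio \<beta> \<gamma> z \<le> 1 / \<gamma>"
proof -
  have "\<beta> * \<gamma> * z \<le> z"
    using assms beta_gamma_less_1 mult_right_mono[of "\<beta> * \<gamma>" 1 z] by simp
  then have "\<gamma> * (\<beta> * z + 1) \<le> z + \<gamma>"
    by (simp add: algebra_simps)
  then show ?thesis
    using assms gamma_pos by (simp add: ratio_def divide_le_eq le_divide_eq mult.commute)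
qed

lemma ratio_pos:
  assumes "z \<ge> 0"
  shows "ratio \<beta> \<gamma> z > 0"
  using ratio_gt[OF assms] beta_nonneg by linarith

lemma ratio_inv_nonneg:
  assumes "\<beta> < y" "y \<le> 1 / \<gamma>"
  shows "0 \<le> ratio_inv \<beta> \<gamma> y"
proof -
  have "\<gamma> * y \<le> 1"
    using assms(2) gamma_pos by (simp add: le_divide_eq mult.commute)
  then show ?thesis
    using assms(1) by (simp add: ratio_inv_def)
qed

lemma ratio_ratio_inv:
  assumes "\<beta> < y"
  shows "ratio \<beta> \<gamma> (ratio_inv \<beta> \<gamma> y) = y"
proof -
  have "y - \<beta> \<noteq> 0" "1 - \<beta> * \<gamma> \<noteq> 0"
    using assms beta_gamma_less_1 by auto
  moreover have "\<beta> * ratio_inv \<beta> \<gamma> y + 1 = y * (1 - \<beta> * \<gamma>) / (y - \<beta>)"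
    and "ratio_inv \<beta> \<gamma> y + \<gamma> = (1 - \<beta> * \<gamma>) / (y - \<beta>)"
    using calculation by (simp_all add: ratio_inv_def field_simps)
  ultimately show ?thesis
    by (simp add: ratio_def)
qed

lemma h_fun_eq_ratio:
  assumes "z \<ge> 0"
  shows "h_fun \<beta> \<gamma> z =
    (1 + \<beta> * \<gamma> - \<gamma> * ratio \<beta> \<gamma> z - \<beta> / ratio \<beta> \<gamma> z) / (1 - \<beta> * \<gamma>)"
proof -
  define p q where "p = \<beta> * z + 1" and "q = z + \<gamma>"
  have "p > 0" "q > 0" "1 - \<beta> * \<gamma> > 0"
    using assms beta_nonneg gamma_pos beta_gamma_less_1 by (auto simp: p_def q_def add_nonneg_pos)
  then have "1 + \<beta> * \<gamma> - \<gamma> * (p / q) - \<beta> / (p / q)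
      = ((1 + \<beta> * \<gamma>) * p * q - \<gamma> * p\<^sup>2 - \<beta> * q\<^sup>2) / (p * q)"
    by (simp add: field_simps power2_eq_square)
  also have "\<dots> = (1 - \<beta> * \<gamma>) * ((1 - \<beta> * \<gamma>) * z / (p * q))"
    by (simp add: p_def q_def algebra_simps power2_eq_square)
  finally show ?thesis
    using \<open>1 - \<beta> * \<gamma> > 0\<close> by (simp add: h_fun_def ratio_def p_def q_def)
qed

lemma sum_h_fun_le:
  assumes "finite A" "\<And>i. i \<in> A \<Longrightarrow> z i \<ge> 0" "w \<ge> 0"
    and "real (card A) * ratio \<beta> \<gamma> w \<le> (\<Sum>i\<in>A. ratio \<beta> \<gamma> (z i))"
    and "real (card A) / ratio \<beta> \<gamma> w \<le> (\<Sum>i\<in>A. 1 / ratio \<beta> \<gamma> (z i))"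
  shows "(\<Sum>i\<in>A. h_fun \<beta> \<gamma> (z i)) \<le> real (card A) * h_fun \<beta> \<gamma> w"
proof -
  let ?r = "ratio \<beta> \<gamma>"
  have "(\<Sum>i\<in>A. h_fun \<beta> \<gamma> (z i)) =
      (real (card A) * (1 + \<beta> * \<gamma>) - \<gamma> * (\<Sum>i\<in>A. ?r (z i))
        - \<beta> * (\<Sum>i\<in>A. 1 / ?r (z i))) / (1 - \<beta> * \<gamma>)"
    using assms(2) by (simp add: h_fun_eq_ratio sum_divide_distrib[symmetric]
        sum_subtractf sum_distrib_left)
  also have "\<dots> \<le> (real (card A) * (1 + \<beta> * \<gamma>) - \<gamma> * (real (card A) * ?r w)
        - \<beta> * (real (card A) / ?r w)) / (1 - \<beta> * \<gamma>)"
    using assms(4,5) beta_nonneg gamma_pos beta_gamma_less_1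
    by (intro divide_right_mono diff_mono mult_left_mono) auto
  also have "\<dots> = real (card A) * h_fun \<beta> \<gamma> w"
    using assms(3) by (simp add: h_fun_eq_ratio algebra_simps)
  finally show ?thesis .
qed

end

theorem lemma3p16:
  fixes \<beta> \<gamma> lam :: real and d :: nat and x :: "nat \<Rightarrow> real"
  assumes "\<beta> \<ge> 0" "\<gamma> > 0" "lam > 0" "\<beta> * \<gamma> < 1" "d \<ge> 1"
    and "\<forall>i\<in>{1..d}. x i \<ge> 0"
  shows "\<exists>xb::real. xb \<ge> 0 \<and>
     (\<Sum>i=1..d. h_fun \<beta> \<gamma> (x i)) \<le> real d * h_fun \<beta> \<gamma> xb \<and>
     F_fun \<beta> \<gamma> lam d x = F_fun \<beta> \<gamma> lam d (\<lambda>_. xb)"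
proof -
  interpret antiferromagnetic \<beta> \<gamma>
    using assms(1,2,4) by unfold_locales
  let ?r = "\<lambda>i. ratio \<beta> \<gamma> (x i)"
  define G where "G = geo_mean {1..d} ?r"
  define xb where "xb = ratio_inv \<beta> \<gamma> G"
  have nonempty: "{1..d} \<noteq> {}"
    using assms(5) by simp
  have r_pos: "\<And>i. i \<in> {1..d} \<Longrightarrow> ?r i > 0"
    using assms(6) ratio_pos by blast
  have "\<beta> < G" "G \<le> 1 / \<gamma>"
    using assms(1,6) nonempty ratio_gt ratio_le ratio_pos unfolding G_def
    by (auto intro!: geo_mean_gt geo_mean_le)
  then have xb_nonneg: "xb \<ge> 0" and r_xb: "ratio \<beta> \<gamma> xb = G"
    unfolding xb_def by (simp_all add: ratio_inv_nonneg ratio_ratio_inv)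
  have "(\<Sum>i=1..d. h_fun \<beta> \<gamma> (x i)) \<le> real d * h_fun \<beta> \<gamma> xb"
    using sum_h_fun_le[of "{1..d}" x xb] assms(6) xb_nonneg r_xb r_pos nonempty
      card_mult_geo_mean_le_sum[of "{1..d}" ?r] card_div_geo_mean_le_sum_inverse[of "{1..d}" ?r]
    by (simp add: G_def)
  moreover have "F_fun \<beta> \<gamma> lam d x = F_fun \<beta> \<gamma> lam d (\<lambda>_. xb)"
    using geo_mean_power[of "{1..d}" ?r] r_pos r_xb
    by (simp add: F_fun_eq_prod_ratio G_def)
  ultimately show ?thesis
    using xb_nonneg by blast
qed

end
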